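(* Let $k,t\ge0$ be integers and $\mathcal{H}$ a hypothesis class. If $\mathrm{ELdim}(\mathcal{H},k)\ge t$, then $\mathcal{S}(\mathcal{H},t)\ge\binom{t}{\le k+1}$.
   Context: Hypotheses are maps $\mathcal{X}\to\{-1,+1\}$; $\binom{t}{\le j}=\sum_{i=0}^{j}\binom{t}{i}$. Tree shattering coefficient: for a depth-$t$ $\mathcal{X}$-valued tree $\mathbf{x}=(\mathbf{x}_1,\dots,\mathbf{x}_t)$, $\mathbf{x}_s:\{\pm1\}^{s-1}\to\mathcal{X}$, let $S(\mathcal{H},\mathbf{x})=\{\epsilon\in\{\pm1\}^t:\exists h\in\mathcal{H},\ \epsilon_s=h(\mathbf{x}_s(\epsilon_1,\dots,\epsilon_{s-1}))\ \forall s\}$ and $\mathcal{S}(\mathcal{H},t)=\max_{\mathbf{x}}|S(\mathcal{H},\mathbf{x})|$ for $t\ge1$; $\mathcal{S}(\mathcal{H},0)=1$ if $\mathcal{H}\ne\emptyset$, else $0$. Extended mistake tree w.r.t. $\mathcal{H}$: a finite full binary tree (possibly a single leaf) in which each internal node $v$ is labeled by $x_v\in\mathcal{X}$ and has two solid downward edges, to its left child (label $-1$) and right child (label $+1$), plus one dashed downward edge to one of its two children; each leaf is labeled by some $h\in\mathcal{H}$ with $h(x_v)$ equal to the direction label at every internal node $v$ on the root-to-leaf path. A root-to-leaf path chooses at each internal node one downward edge; its length is its number of edges. The tree is $(k,m)$-difficult if every root-to-leaf path using at most $k$ solid edges has length at least $m$. $\mathrm{ELdim}(\mathcal{H},k)$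 is the supremum of $m$ such that a $(k,m)$-difficult extended mistake tree w.r.t. $\mathcal{H}$ exists (so $\mathrm{ELdim}(\mathcal{H},k)\ge0$ forces $\mathcal{H}\neq\emptyset$). *)

theory Defs
  imports "HOL-Analysis.Analysis"
begin

text \<open>Labels: False encodes -1, True encodes +1. Hypotheses are maps 'x \<Rightarrow> bool.\<close>

text \<open>A depth-t X-valued tree is a function from sign prefixes to X:
  x_s(eps_1,...,eps_{s-1}) = T [eps_1,...,eps_{s-1}] (only prefixes of length < t matter).\<close>

definition shattered_set :: "('x \<Rightarrow> bool) set \<Rightarrow> (bool list \<Rightarrow> 'x) \<Rightarrow> nat \<Rightarrow> bool list set" where
  "shattered_set H T t = {eps. length eps = t \<and>
      (\<exists>h\<in>H. \<forall>s<t. eps ! s = h (T (take s eps)))}"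

definition shatter_coeff :: "('x \<Rightarrow> bool) set \<Rightarrow> nat \<Rightarrow> nat" where
  "shatter_coeff H t = Max {card (shattered_set H T t) | T. True}"

text \<open>Node x d l r: internal node labelled x, left child l (label -1 = False),
  right child r (label +1 = True), dashed edge to the child in direction d.\<close>
datatype 'x emtree = Leaf "'x \<Rightarrow> bool" | Node 'x bool "'x emtree" "'x emtree"

fun emt_valid :: "('x \<Rightarrow> bool) set \<Rightarrow> ('x \<times> bool) list \<Rightarrow> 'x emtree \<Rightarrow> bool" where
  "emt_valid H C (Leaf h) = (h \<in> H \<and> (\<forall>(x, b) \<in> set C. h x = b))"
| "emt_valid H C (Node x d l r) =
     (emt_valid H ((x, False) # C) l \<and> emt_valid H ((x, True) # C) r)"

definition ext_mistake_tree :: "('x \<Rightarrow> bool) set \<Rightarrow> 'x emtree \<Rightarrow> bool" where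
  "ext_mistake_tree H T = emt_valid H [] T"

datatype edge = Dashed | Solid bool

fun emt_paths :: "'x emtree \<Rightarrow> edge list set" where
  "emt_paths (Leaf h) = {[]}"
| "emt_paths (Node x d l r) =
     {Dashed # p | p. p \<in> emt_paths (if d then r else l)}
   \<union> {Solid False # p | p. p \<in> emt_paths l}
   \<union> {Solid True # p | p. p \<in> emt_paths r}"

definition num_solid :: "edge list \<Rightarrow> nat" where
  "num_solid p = length (filter (\<lambda>e. e \<noteq> Dashed) p)"

definition difficult :: "nat \<Rightarrow> nat \<Rightarrow> 'x emtree \<Rightarrow> bool" where
  "difficult k m T = (\<forall>p \<in> emt_paths T. num_solid p \<le> k \<longrightarrow> m \<le> length p)"

definition ELdim :: "('x \<Rightarrow> bool) set \<Rightarrow> nat \<Rightarrow> ereal" where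
  "ELdim H k = Sup {ereal (real m) | m. \<exists>T. ext_mistake_tree H T \<and> difficult k m T}"

end

theory Submission
  imports Defs
begin

text \<open>Induction on the depth t, carrying along the class of hypotheses consistent with the
  labels on the path taken so far. Below the root x of a (k, t)-difficult tree the dashed child
  is (k, t-1)-difficult and the other child (k-1, t-1)-difficult; for k = 0 the latter only
  needs one consistent hypothesis, which shatters one sequence. Splitting the class by the label
  at x and putting x above the two shattering trees obtained by induction shatters the disjoint
  union of both sequence sets, and Pascal's rule adds the two binomial bounds up to the bound
  for depth t.\<close>

definition version_space :: "('x \<Rightarrow> bool) set \<Rightarrow> ('x \<times> bool) list \<Rightarrow> ('x \<Rightarrow> bool) set" where
  "version_space H C = {h \<in> H. \<forall>(x, b) \<in> set C. h x = b}"

lemma version_space_Nil [simp]: "version_space H [] = H"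
  by (simp add: version_space_def)

lemma version_space_Cons [simp]:
  "version_space H ((x, b) # C) = {h \<in> version_space H C. h x = b}"
  by (auto simp: version_space_def)

lemma emt_valid_version_space_nonempty: "emt_valid H C T \<Longrightarrow> version_space H C \<noteq> {}"
  by (induction T arbitrary: C) (fastforce simp: version_space_def)+

definition tree_join :: "'x \<Rightarrow> (bool \<Rightarrow> bool list \<Rightarrow> 'x) \<Rightarrow> bool list \<Rightarrow> 'x" where
  "tree_join x T p = (case p of [] \<Rightarrow> x | b # q \<Rightarrow> T b q)"

lemma tree_join_root_subtrees: "tree_join (T []) (\<lambda>b q. T (b # q)) = T"
  by (auto simp: tree_join_def fun_eq_iff split: list.split)

lemma shattered_set_0: "shattered_set G T 0 = (if G = {} then {} else {[]})"
  by (auto simp: shattered_set_def)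

lemma shattered_set_tree_join:
  "shattered_set G (tree_join x T) (Suc t) =
     (\<Union>b. Cons b ` shattered_set {h \<in> G. h x = b} (T b) t)"
proof (intro set_eqI iffI)
  fix eps assume "eps \<in> shattered_set G (tree_join x T) (Suc t)"
  then obtain b e where "eps = b # e" by (cases eps) (auto simp: shattered_set_def)
  with \<open>eps \<in> _\<close> show "eps \<in> (\<Union>b. Cons b ` shattered_set {h \<in> G. h x = b} (T b) t)"
    by (auto simp: shattered_set_def tree_join_def All_less_Suc2)
qed (auto simp: shattered_set_def tree_join_def All_less_Suc2)

lemma shattered_set_subset_lists: "shattered_set G T t \<subseteq> {eps. length eps = t}"
  by (auto simp: shattered_set_def)

lemma
  shows finite_bool_lists_length_eq: "finite {eps :: bool list. length eps = t}"
    and card_bool_lists_length_eq: "card {eps :: bool list. length eps = t} = 2 ^ t"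
  using finite_lists_length_eq[of "UNIV :: bool set" t] card_lists_length_eq[of "UNIV :: bool set" t]
  by simp_all

lemma finite_shattered_set: "finite (shattered_set G T t)"
  by (rule finite_subset[OF shattered_set_subset_lists finite_bool_lists_length_eq])

lemma card_shattered_set_le_power: "card (shattered_set G T t) \<le> 2 ^ t"
  using card_mono[OF finite_bool_lists_length_eq shattered_set_subset_lists]
  by (simp add: card_bool_lists_length_eq)

lemma card_shattered_set_le_shatter_coeff: "card (shattered_set H T t) \<le> shatter_coeff H t"
  unfolding shatter_coeff_def
proof (rule Max_ge)
  show "finite {card (shattered_set H T t) | T. True}"
    by (rule finite_subset[of _ "{..2 ^ t}"]) (auto intro: card_shattered_set_le_power)
qed blast

lemma card_shattered_set_tree_join:
  "card (shattered_set G (tree_join x T) (Suc t)) =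
     card (shattered_set {h \<in> G. h x = d} (T d) t) + card (shattered_set {h \<in> G. h x = (\<not> d)} (T (\<not> d)) t)"
proof -
  have "(\<Union>b. A b) = A d \<union> A (\<not> d)" for A :: "bool \<Rightarrow> bool list set"
    by (cases d) (auto simp: UNIV_bool)
  then have "card (shattered_set G (tree_join x T) (Suc t)) =
      card (Cons d ` shattered_set {h \<in> G. h x = d} (T d) t \<union>
            Cons (\<not> d) ` shattered_set {h \<in> G. h x = (\<not> d)} (T (\<not> d)) t)"
    by (simp add: shattered_set_tree_join)
  also have "\<dots> = card (Cons d ` shattered_set {h \<in> G. h x = d} (T d) t) +
      card (Cons (\<not> d) ` shattered_set {h \<in> G. h x = (\<not> d)} (T (\<not> d)) t)"
    by (rule card_Un_disjoint) (auto simp: finite_shattered_set)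
  finally show ?thesis
    by (simp add: card_image)
qed

lemma shattered_set_nonempty: "G \<noteq> {} \<Longrightarrow> shattered_set G T t \<noteq> {}"
proof (induction t arbitrary: G T)
  case 0
  then show ?case by (simp add: shattered_set_0)
next
  case (Suc t)
  then obtain h where "h \<in> G" by blast
  then have "{g \<in> G. g (T []) = h (T [])} \<noteq> {}" by blast
  then have "shattered_set {g \<in> G. g (T []) = h (T [])} (\<lambda>q. T (h (T []) # q)) t \<noteq> {}"
    by (rule Suc.IH)
  then show ?case
    using shattered_set_tree_join[of G "T []" "\<lambda>b q. T (b # q)" t]
    by (auto simp: tree_join_root_subtrees)
qed

lemma card_shattered_set_pos: "G \<noteq> {} \<Longrightarrow> 0 < card (shattered_set G T t)"
  by (simp add: card_gt_0_iff finite_shattered_set shattered_set_nonempty)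

lemma difficult_Leaf: "difficult k m (Leaf h) \<longleftrightarrow> m = 0"
  by (simp add: difficult_def num_solid_def)

lemma difficult_Node_dashed:
  assumes "difficult k (Suc m) (Node x d l r)"
  shows "difficult k m (if d then r else l)"
  unfolding difficult_def
proof (intro ballI impI)
  fix p assume "p \<in> emt_paths (if d then r else l)" "num_solid p \<le> k"
  then have "Dashed # p \<in> emt_paths (Node x d l r)" "num_solid (Dashed # p) \<le> k"
    by (auto simp: num_solid_def)
  then show "m \<le> length p"
    using assms by (auto simp: difficult_def)
qed

lemma difficult_Node_solid:
  assumes "difficult (Suc k) (Suc m) (Node x d l r)"
  shows "difficult k m (if b then r else l)"
  unfolding difficult_def
proof (intro ballI impI)
  fix p assume "p \<in> emt_paths (if b then r else l)" "num_solid p \<le> k"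
  then have "Solid b # p \<in> emt_paths (Node x d l r)" "num_solid (Solid b # p) \<le> Suc k"
    by (auto simp: num_solid_def split: if_splits)
  then show "m \<le> length p"
    using assms by (auto simp: difficult_def)
qed

lemma difficult_mono: "m' \<le> m \<Longrightarrow> difficult k m T \<Longrightarrow> difficult k m' T"
  by (auto simp: difficult_def)

lemma sum_choose_Suc:
  "(\<Sum>i\<le>k+1. Suc t choose i) = (\<Sum>i\<le>k+1. t choose i) + (\<Sum>i\<le>k. t choose i)"
  by (induction k) auto

lemma card_shattered_set_tree_join_ge:
  assumes "(\<Sum>i\<le>k+1. t choose i) \<le> card (shattered_set {h \<in> G. h x = d} XD t)"
    and "(\<Sum>i\<le>k. t choose i) \<le> card (shattered_set {h \<in> G. h x = (\<not> d)} XN t)"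
  shows "(\<Sum>i\<le>k+1. Suc t choose i) \<le>
           card (shattered_set G (tree_join x (\<lambda>b. if b = d then XD else XN)) (Suc t))"
  unfolding card_shattered_set_tree_join[where d = d] sum_choose_Suc
  using assms by simp

lemma difficult_tree_shatters:
  assumes "emt_valid H C T" and "difficult k t T"
  shows "\<exists>X. (\<Sum>i\<le>k+1. t choose i) \<le> card (shattered_set (version_space H C) X t)"
  using assms
proof (induction t arbitrary: C T k)
  case 0
  then have "0 < card (shattered_set (version_space H C) undefined 0)"
    by (intro card_shattered_set_pos emt_valid_version_space_nonempty)
  moreover have "(\<Sum>i\<le>k+1. 0 choose i) = 1"
    by (induction k) auto
  ultimately show ?case
    by (intro exI[of _ undefined]) (simp add: Suc_le_eq)
next
  case (Suc t)
  then obtain x d l r where T: "T = Node x d l r"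
    by (cases T) (auto simp: difficult_Leaf)
  define D where "D = (if d then r else l)"
  define N where "N = (if d then l else r)"
  have valid_D: "emt_valid H ((x, d) # C) D" and valid_N: "emt_valid H ((x, \<not> d) # C) N"
    using Suc.prems(1) by (auto simp: T D_def N_def)
  have "difficult k t D"
    using Suc.prems(2) unfolding T D_def by (rule difficult_Node_dashed)
  then obtain XD where XD: "(\<Sum>i\<le>k+1. t choose i) \<le> card (shattered_set (version_space H ((x, d) # C)) XD t)"
    using Suc.IH[OF valid_D] by blast
  obtain XN where XN: "(\<Sum>i\<le>k. t choose i) \<le> card (shattered_set (version_space H ((x, \<not> d) # C)) XN t)"
  proof (cases k)
    case 0
    then have "(\<Sum>i\<le>k. t choose i) \<le> card (shattered_set (version_space H ((x, \<not> d) # C)) undefined t)"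
      using card_shattered_set_pos[OF emt_valid_version_space_nonempty[OF valid_N]] by (simp add: Suc_le_eq)
    then show ?thesis by (rule that)
  next
    case (Suc k')
    then have "difficult k' t N"
      using difficult_Node_solid[where b = "\<not> d"] Suc.prems(2) by (auto simp: T N_def)
    then show ?thesis
      using that Suc.IH[OF valid_N] \<open>k = Suc k'\<close> by auto
  qed
  show ?case
    using card_shattered_set_tree_join_ge XD XN by fastforce
qed

lemma ELdim_ge_imp_difficult_tree:
  assumes "ELdim H k \<ge> ereal (real t)"
  shows "\<exists>T. ext_mistake_tree H T \<and> difficult k t T"
proof (rule ccontr)
  assume none: "\<not> ?thesis"
  have "ELdim H k \<le> ereal (real t - 1)"
    unfolding ELdim_def
  proof (rule Sup_least, clarify)
    fix m T assume "ext_mistake_tree H T" "difficult k m T"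
    then have "m < t" using none difficult_mono by (meson not_le)
    then show "ereal (real m) \<le> ereal (real t - 1)" by simp
  qed
  with assms show False
    using order_trans by fastforce
qed

theorem mainTheorem17:
  fixes H :: "('x \<Rightarrow> bool) set" and k t :: nat
  assumes "ELdim H k \<ge> ereal (real t)"
  shows "shatter_coeff H t \<ge> (\<Sum>i\<le>k+1. t choose i)"
proof -
  obtain T where "emt_valid H [] T" "difficult k t T"
    using ELdim_ge_imp_difficult_tree[OF assms] by (auto simp: ext_mistake_tree_def)
  then obtain X where "(\<Sum>i\<le>k+1. t choose i) \<le> card (shattered_set H X t)"
    using difficult_tree_shatters by fastforce
  then show ?thesis
    using card_shattered_set_le_shatter_coeff order_trans by blast
qed

end
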